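(* Let $T=T(n,a,b)$ with $a\ge 0$, $b\ge a+2$ and $2(a+b)<n-1$, let $\ell=n-a-b$, $p=\lfloor\frac{\ell}{2}\rfloor$, $p_1=\lceil\frac{\ell}{2}\rceil$ and $x=x(T)$. Suppose $b<\frac{\ell}{2}$. Then (i) $x_{v_p}>x_{v_{p_1+1}}$; (ii) if $a\ge1$, then $x_{v_i}>x_{v_{\ell+1-i}}$ and $x_{w_i}>x_{w_{\ell-i}}$ for $i=1,\dots,a$; and $x_{v_{a+1}}>x_{v_{\ell-a}}$.
   Context: Hypergraphs have edges that are vertex subsets of size at least two; distance $d_T(u,v)$ in a hypertree is the length of a shortest loose path (an alternating sequence of distinct vertices and distinct edges $(v_0,e_1,v_1,\dots,e_p,v_p)$ with $v_{i-1},v_i\in e_i$ and non-consecutive edges disjoint). $D(T)$ is the distance matrix, $\rho(T)$ its largest eigenvalue, and $x(T)$ the unit positive eigenvector for $\rho(T)$ (distance Perron vector), with entries $x_v$ indexed by vertices. For integers $n,a,b$ with $0\le a\le b$ and $a+b\le\lfloor\frac{n-1}{2}\rfloor$, put $\ell=n-a-b$ and $I=\{1,\dots,a\}\cup\{\ell-b,\dots,\ell-1\}$; $T(n,a,b)$ is the hypertree with vertex set $\{v_1,\dots,v_\ell\}\cup\{w_i:i\in I\}$ and edges $\{v_i,w_i,v_{i+1}\}$ for $i\in I$ and $\{v_i,v_{i+1}\}$ for $i\in\{1,\dots,\ell-1\}\setminus I$. *)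

theory Defs
  imports Complex_Main
begin

text \<open>It is represented by the vertex list vs (length p+1) and the edge
 list es (length p), where es!i plays the role of e_(i+1).\<close>

definition loose_path :: "'a set set \<Rightarrow> 'a list \<Rightarrow> 'a set list \<Rightarrow> bool" where
  "loose_path E vs es \<longleftrightarrow>
     length vs = Suc (length es) \<and> distinct vs \<and> distinct es \<and> set es \<subseteq> E \<and>
     (\<forall>i < length es. vs ! i \<in> es ! i \<and> vs ! Suc i \<in> es ! i) \<and>
     (\<forall>i j. i < length es \<and> j < length es \<and> Suc i < j \<longrightarrow> es ! i \<inter> es ! j = {})"

definition hdist :: "'a set set \<Rightarrow> 'a \<Rightarrow> 'a \<Rightarrow> nat" where
  "hdist E u v = (LEAST p. \<exists>vs es. loose_path E vs es \<and> length es = p \<and>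
                               hd vs = u \<and> last vs = v)"

definition dist_eigenvalues :: "'a set \<Rightarrow> 'a set set \<Rightarrow> real set" where
  "dist_eigenvalues V E = {r. \<exists>x :: 'a \<Rightarrow> real. (\<exists>u\<in>V. x u \<noteq> 0) \<and>
      (\<forall>u\<in>V. (\<Sum>w\<in>V. real (hdist E u w) * x w) = r * x u)}"

definition dist_spectral_radius :: "'a set \<Rightarrow> 'a set set \<Rightarrow> real" where
  "dist_spectral_radius V E = Max (dist_eigenvalues V E)"

definition dist_perron_vector :: "'a set \<Rightarrow> 'a set set \<Rightarrow> ('a \<Rightarrow> real) \<Rightarrow> bool" where
  "dist_perron_vector V E x \<longleftrightarrow>
     (\<forall>u\<in>V. x u > 0) \<and> (\<Sum>u\<in>V. (x u)\<^sup>2) = 1 \<and>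
     (\<forall>u\<in>V. (\<Sum>w\<in>V. real (hdist E u w) * x w) = dist_spectral_radius V E * x u)"

datatype tvtx = Vv nat | Wv nat   \<comment> \<open>Vv i = v_i, Wv i = w_i\<close>

definition Tlen :: "nat \<Rightarrow> nat \<Rightarrow> nat \<Rightarrow> nat" where
  "Tlen n a b = n - a - b"

definition Tidx :: "nat \<Rightarrow> nat \<Rightarrow> nat \<Rightarrow> nat set" where
  "Tidx n a b = {1..a} \<union> {Tlen n a b - b .. Tlen n a b - 1}"

definition T_verts :: "nat \<Rightarrow> nat \<Rightarrow> nat \<Rightarrow> tvtx set" where
  "T_verts n a b = Vv ` {1..Tlen n a b} \<union> Wv ` Tidx n a b"

definition T_edges :: "nat \<Rightarrow> nat \<Rightarrow> nat \<Rightarrow> tvtx set set" where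
  "T_edges n a b = (\<lambda>i. if i \<in> Tidx n a b then {Vv i, Wv i, Vv (Suc i)} else {Vv i, Vv (Suc i)})
                      ` {1..<Tlen n a b}"

end

theory Submission
  imports Defs
begin

(* Put v_i at position 2i and w_i at position 2i+1. In a loose path with pendant vertices the
   distance depends only on the two positions, and for two vertices of a common edge the
   difference of their rows of the distance matrix is a step function of the position. So the
   eigenequation expresses x_u - x_z by prefix sums of x. Folding T at its middle, the
   differences f i = x(v_i) - x(v_(l+1-i)), h i = x(w_(l-i)) - x(w_i) and the difference F i of
   the masses of the two ends satisfy
     rho (f i - f (i+1)) = 2 F i + h i,   F (i+1) = F i - f (i+1) + h i,
     (rho + 1) h i = F i - rho f i  for i <= a,
   while h i >= 0 for a < i <= l/2 and h (a+1) > 0, since w_(l-a-1) exists and w_(a+1) does not.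
   If f 1 <= 0, these force f to decrease strictly to f (l/2) < 0 with F (l/2) > 0, which
   contradicts the sign relation at the middle. Hence f 1 > 0, and then f i > 0 > h i for
   i <= a and f (a+1) > 0. Finally f (l/2) <= 0 would propagate down to f (a+1) <= 0. *)

section \<open>Distances in a loose path with pendant vertices\<close>

lemma loose_path_rev:
  assumes "loose_path E vs es"
  shows "loose_path E (rev vs) (rev es)"
proof -
  have L: "length vs = Suc (length es)"
    and M: "\<forall>i < length es. vs ! i \<in> es ! i \<and> vs ! Suc i \<in> es ! i"
    and J: "\<forall>i j. i < length es \<and> j < length es \<and> Suc i < j \<longrightarrow> es ! i \<inter> es ! j = {}"
    using assms unfolding loose_path_def by auto
  have "rev vs ! i \<in> rev es ! i \<and> rev vs ! Suc i \<in> rev es ! i" if "i < length es" for i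
    using that L M[rule_format, of "length es - Suc i"] by (simp add: rev_nth Suc_diff_Suc)
  moreover have "rev es ! i \<inter> rev es ! j = {}"
    if "i < length es" "j < length es" "Suc i < j" for i j
  proof -
    have "es ! (length es - Suc j) \<inter> es ! (length es - Suc i) = {}"
      using that by (intro J[rule_format]) linarith
    then show ?thesis
      using that by (simp add: rev_nth Int_commute)
  qed
  ultimately show ?thesis
    using assms unfolding loose_path_def by auto
qed

fun pos :: "tvtx \<Rightarrow> nat" where
  "pos (Vv i) = 2 * i"
| "pos (Wv i) = 2 * i + 1"

definition vert :: "nat \<Rightarrow> tvtx" where
  "vert q = (if even q then Vv (q div 2) else Wv (q div 2))"

lemma vert_pos [simp]: "vert (pos u) = u"
  by (cases u) (auto simp: vert_def)

lemma pos_vert [simp]: "pos (vert q) = q"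
  by (auto simp: vert_def)

lemma inj_pos: "inj pos"
  by (metis injI vert_pos)

fun pendant_dist :: "tvtx \<Rightarrow> tvtx \<Rightarrow> nat" where
  "pendant_dist (Vv i) (Vv j) = (if i \<le> j then j - i else i - j)"
| "pendant_dist (Vv i) (Wv j) = (if i \<le> j then j - i + 1 else i - j)"
| "pendant_dist (Wv i) (Vv j) = (if j \<le> i then i - j + 1 else j - i)"
| "pendant_dist (Wv i) (Wv j) = (if i = j then 0 else if i < j then j - i + 1 else i - j + 1)"

lemma pendant_dist_sym: "pendant_dist u w = pendant_dist w u"
  by (cases u; cases w) auto

lemma pendant_dist_self [simp]: "pendant_dist u u = 0"
  by (cases u) auto

lemma pendant_dist_triangle: "pendant_dist u z \<le> pendant_dist u w + pendant_dist w z"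
  by (cases u; cases w; cases z) auto

lemma pendant_dist_le_one:
  assumes "pos u \<in> {2*k..2*k+2}" "pos w \<in> {2*k..2*k+2}"
  shows "pendant_dist u w \<le> 1"
  using assms by (cases u; cases w) (auto, presburger+)

lemma pendant_dist_pos_less:
  assumes "pos u < pos w"
  shows "pendant_dist u w = (pos w + 1) div 2 - pos u div 2"
  using assms by (cases u; cases w) auto

lemma pendant_dist_diff_Vv_Suc:
  "real (pendant_dist (Vv i) w) - real (pendant_dist (Vv (Suc i)) w)
     = (if pos w < 2*i+1 then -1 else if pos w = 2*i+1 then 0 else 1)"
  by (cases w) (auto, presburger)

lemma pendant_dist_diff_Wv_Vv:
  "real (pendant_dist (Wv j) w) - real (pendant_dist (Vv j) w)
     = (if pos w < 2*j+1 then 1 else if pos w = 2*j+1 then -1 else 0)"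
  by (cases w) (auto, presburger)

lemma pendant_dist_diff_Wv_Vv_Suc:
  "real (pendant_dist (Wv j) w) - real (pendant_dist (Vv (Suc j)) w)
     = (if pos w < 2*j+1 then 0 else if pos w = 2*j+1 then -1 else 1)"
  by (cases w) (auto, presburger)

lemma pendant_dist_chain_le:
  assumes "us \<noteq> []" and "\<And>i. Suc i < length us \<Longrightarrow> pendant_dist (us ! i) (us ! Suc i) \<le> 1"
  shows "pendant_dist (hd us) (last us) \<le> length us - 1"
  using assms
proof (induction us)
  case Nil
  then show ?case by simp
next
  case (Cons u us)
  show ?case
  proof (cases "us = []")
    case True
    then show ?thesis by simp
  next
    case False
    have "pendant_dist (hd us) (last us) \<le> length us - 1"
      using Cons.IH False Cons.prems(2)[of "Suc _"] by simp
    moreover have "pendant_dist u (hd us) \<le> 1"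
      using Cons.prems(2)[of 0] False by (simp add: hd_conv_nth)
    ultimately show ?thesis
      using pendant_dist_triangle[of u "last us" "hd us"] False by (cases us) auto
  qed
qed

definition pendant_path_edge :: "nat set \<Rightarrow> nat \<Rightarrow> tvtx set" where
  "pendant_path_edge I k = (if k \<in> I then {Vv k, Wv k, Vv (Suc k)} else {Vv k, Vv (Suc k)})"

definition pendant_path_verts :: "nat \<Rightarrow> nat set \<Rightarrow> tvtx set" where
  "pendant_path_verts l I = Vv ` {1..l} \<union> Wv ` I"

definition pendant_path_edges :: "nat \<Rightarrow> nat set \<Rightarrow> tvtx set set" where
  "pendant_path_edges l I = pendant_path_edge I ` {1..<l}"

lemma T_verts_eq: "T_verts n a b = pendant_path_verts (Tlen n a b) (Tidx n a b)"
  unfolding T_verts_def pendant_path_verts_def ..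

lemma T_edges_eq: "T_edges n a b = pendant_path_edges (Tlen n a b) (Tidx n a b)"
  unfolding T_edges_def pendant_path_edges_def pendant_path_edge_def ..

lemma pos_mem_pendant_path_edge: "u \<in> pendant_path_edge I k \<Longrightarrow> pos u \<in> {2*k..2*k+2}"
  unfolding pendant_path_edge_def by (auto split: if_splits)

lemma Vv_mem_pendant_path_edge: "Vv j \<in> pendant_path_edge I k \<longleftrightarrow> j = k \<or> j = Suc k"
  unfolding pendant_path_edge_def by auto

lemma inj_pendant_path_edge: "inj (pendant_path_edge I)"
proof (rule injI)
  fix k k' assume "pendant_path_edge I k = pendant_path_edge I k'"
  then have "Vv k \<in> pendant_path_edge I k'" "Vv (Suc k) \<in> pendant_path_edge I k'"
    by (metis Vv_mem_pendant_path_edge)+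
  then show "k = k'"
    unfolding Vv_mem_pendant_path_edge by auto
qed

lemma pendant_path_edges_disjoint:
  "Suc k < k' \<Longrightarrow> pendant_path_edge I k \<inter> pendant_path_edge I k' = {}"
  unfolding pendant_path_edge_def by auto

locale pendant_path =
  fixes l :: nat and I :: "nat set"
  assumes I_subset: "I \<subseteq> {1..<l}"
begin

abbreviation "V \<equiv> pendant_path_verts l I"
abbreviation "E \<equiv> pendant_path_edges l I"

lemma Vv_in_V: "Vv j \<in> V \<longleftrightarrow> 1 \<le> j \<and> j \<le> l"
  unfolding pendant_path_verts_def by auto

lemma Wv_in_V: "Wv j \<in> V \<longleftrightarrow> j \<in> I"
  unfolding pendant_path_verts_def by auto

lemma finite_V: "finite V"
  using I_subset finite_subset unfolding pendant_path_verts_def by blast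

lemma pos_in_V: "u \<in> V \<Longrightarrow> pos u \<in> {2..2*l}"
  using I_subset by (cases u) (auto simp: Vv_in_V Wv_in_V)

lemma loose_path_pos_less:
  assumes u: "u \<in> V" and z: "z \<in> V" and lt: "pos u < pos z"
  obtains vs es where "loose_path E vs es" "length es = pendant_dist u z" "hd vs = u" "last vs = z"
proof -
  define i where "i = pos u div 2"
  define m where "m = pendant_dist u z"
  \<comment> \<open>u, v_(i+1), ..., v_(i+m-1), z along the edges with indices i, ..., i+m-1\<close>
  define g where "g k = (if k = 0 then u else if k = m then z else Vv (i + k))" for k
  define vs where "vs = map g [0..<Suc m]"
  define es where "es = map (\<lambda>k. pendant_path_edge I (i + k)) [0..<m]"
  have m: "m = (pos z + 1) div 2 - i" "0 < m"
    using pendant_dist_pos_less[OF lt] lt unfolding m_def i_def by simp_all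
  have u_cases: "u = Vv i \<or> u = Wv i"
    unfolding i_def by (cases u) auto
  have z_cases: "z = Vv (i + m) \<or> z = Wv (i + m - 1)"
    using m lt unfolding i_def by (cases u; cases z) auto
  have "i \<ge> 1" "i + m \<le> l"
    using pos_in_V[OF u] pos_in_V[OF z] m unfolding i_def by auto
  then have "set es \<subseteq> E"
    unfolding es_def pendant_path_edges_def by auto
  have "pos (g k) < pos (g k')" if "k < k'" "k' \<le> m" for k k'
    using that u_cases z_cases m lt unfolding g_def by auto
  then have "inj_on g {0..m}"
    by (metis atLeastAtMost_iff inj_onI less_irrefl nat_neq_iff)
  then have "distinct vs"
    unfolding vs_def distinct_map by (simp del: upt_Suc add: atLeastLessThanSuc_atLeastAtMost)
  moreover have "distinct es"
    unfolding es_def distinct_map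
    by (simp add: inj_on_def inj_pendant_path_edge[THEN inj_eq])
  moreover have "vs ! k \<in> es ! k \<and> vs ! Suc k \<in> es ! k" if "k < m" for k
    using that u_cases z_cases u z lt
    by (auto simp: vs_def es_def g_def nth_append pendant_path_edge_def Wv_in_V simp del: upt_Suc)
  moreover have "es ! k \<inter> es ! k' = {}" if "k < m" "k' < m" "Suc k < k'" for k k'
    using that pendant_path_edges_disjoint unfolding es_def by simp
  ultimately have "loose_path E vs es"
    using \<open>set es \<subseteq> E\<close> unfolding loose_path_def by (simp add: vs_def es_def del: upt_Suc)
  moreover have "hd vs = u" "last vs = z"
    using m unfolding vs_def g_def by (simp_all add: hd_map last_map del: upt_Suc)
  moreover have "length es = pendant_dist u z"
    unfolding es_def m_def by simp
  ultimately show ?thesis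
    using that by blast
qed

lemma pendant_dist_le_loose_path_length:
  assumes "loose_path E vs es"
  shows "pendant_dist (hd vs) (last vs) \<le> length es"
proof -
  have L: "length vs = Suc (length es)" and S: "set es \<subseteq> E"
    and M: "\<forall>i < length es. vs ! i \<in> es ! i \<and> vs ! Suc i \<in> es ! i"
    using assms unfolding loose_path_def by auto
  have "pendant_dist (vs ! i) (vs ! Suc i) \<le> 1" if "Suc i < length vs" for i
  proof -
    have i: "i < length es" using that L by simp
    then obtain k where "es ! i = pendant_path_edge I k"
      using S nth_mem unfolding pendant_path_edges_def by blast
    then show ?thesis
      using M i pos_mem_pendant_path_edge pendant_dist_le_one by metis
  qed
  then show ?thesis
    using pendant_dist_chain_le[of vs] L by fastforce
qed

lemma hdist_eq_pendant_dist:
  assumes u: "u \<in> V" and z: "z \<in> V"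
  shows "hdist E u z = pendant_dist u z"
  unfolding hdist_def
proof (rule Least_equality)
  show "\<exists>vs es. loose_path E vs es \<and> length es = pendant_dist u z \<and> hd vs = u \<and> last vs = z"
  proof (cases "pos u" "pos z" rule: linorder_cases)
    case less
    then show ?thesis using loose_path_pos_less[OF u z] by metis
  next
    case equal
    then have "u = z" by (metis vert_pos)
    moreover have "loose_path E [u] []" unfolding loose_path_def by simp
    ultimately show ?thesis by force
  next
    case greater
    then obtain vs es where "loose_path E vs es" "length es = pendant_dist z u" "hd vs = z" "last vs = u"
      using loose_path_pos_less[OF z u] by metis
    then show ?thesis
      using loose_path_rev pendant_dist_sym
      by (intro exI[of _ "rev vs"] exI[of _ "rev es"]) (auto simp: hd_rev last_rev)
  qed
qed (use pendant_dist_le_loose_path_length in blast)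

end

section \<open>The distance eigenequation in terms of positions\<close>

lemma sum_piecewise_coeff:
  fixes X :: "nat \<Rightarrow> real"
  assumes "k < K"
  shows "(\<Sum>q<K. (if q < k then \<alpha> else if q = k then \<beta> else \<gamma>) * X q)
       = \<alpha> * (\<Sum>q<k. X q) + \<beta> * X k + \<gamma> * ((\<Sum>q<K. X q) - (\<Sum>q<Suc k. X q))"
  using assms
proof (induction K)
  case 0
  then show ?case by simp
next
  case (Suc K)
  then show ?case
    by (cases "k < K") (auto simp: algebra_simps sum_distrib_left less_Suc_eq)
qed

locale pendant_path_perron = pendant_path +
  fixes x :: "tvtx \<Rightarrow> real"
  assumes perron: "dist_perron_vector V E x"
begin

abbreviation "\<rho> \<equiv> dist_spectral_radius V E"

definition X :: "nat \<Rightarrow> real" where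
  "X q = (if vert q \<in> V then x (vert q) else 0)"

definition P :: "nat \<Rightarrow> real" where
  "P k = (\<Sum>q<k. X q)"

abbreviation "mass \<equiv> P (2 * l + 1)"

lemma x_pos: "u \<in> V \<Longrightarrow> 0 < x u"
  using perron unfolding dist_perron_vector_def by auto

lemma X_pos: "u \<in> V \<Longrightarrow> X (pos u) = x u"
  unfolding X_def by simp

lemma X_Vv: "X (2 * j) = (if 1 \<le> j \<and> j \<le> l then x (Vv j) else 0)"
  unfolding X_def vert_def by (simp add: Vv_in_V)

lemma X_Wv: "X (Suc (2 * j)) = (if j \<in> I then x (Wv j) else 0)"
  unfolding X_def vert_def by (simp add: Wv_in_V)

lemma X_eq_0: "2 * l < q \<Longrightarrow> X q = 0"
  using pos_in_V[of "vert q"] unfolding X_def by auto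

lemma P_Suc: "P (Suc k) = P k + X k"
  unfolding P_def by simp

lemma P_eq_mass: "2 * l < k \<Longrightarrow> P k = mass"
  by (induction k) (auto simp: P_Suc X_eq_0 less_Suc_eq)

lemma sum_V_pos:
  assumes "2 * l < K"
  shows "(\<Sum>w\<in>V. g (pos w) * x w) = (\<Sum>q<K. g q * X q)"
proof -
  have "(\<Sum>w\<in>V. g (pos w) * x w) = (\<Sum>q\<in>pos ` V. g q * X q)"
    by (simp add: sum.reindex inj_on_subset[OF inj_pos] X_pos)
  also have "\<dots> = (\<Sum>q<K. g q * X q)"
  proof (rule sum.mono_neutral_left)
    show "pos ` V \<subseteq> {..<K}"
      using pos_in_V assms by fastforce
    show "\<forall>q\<in>{..<K} - pos ` V. g q * X q = 0"
      unfolding X_def by (metis DiffD2 image_eqI mult_zero_right pos_vert)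
  qed simp
  finally show ?thesis .
qed

lemma rho_mult_diff_piecewise:
  assumes "u \<in> V" "z \<in> V"
    and coeff: "\<And>w. real (pendant_dist u w) - real (pendant_dist z w)
                  = (if pos w < k then \<alpha> else if pos w = k then \<beta> else \<gamma>)"
  shows "\<rho> * (x u - x z) = \<alpha> * P k + \<beta> * X k + \<gamma> * (mass - P (Suc k))"
proof -
  define K where "K = 2 * l + k + 1"
  have K: "2 * l < K" "k < K" unfolding K_def by simp_all
  have eig: "(\<Sum>w\<in>V. real (pendant_dist v w) * x w) = \<rho> * x v" if "v \<in> V" for v
    using perron that hdist_eq_pendant_dist unfolding dist_perron_vector_def by auto
  have "\<rho> * (x u - x z) = (\<Sum>w\<in>V. (real (pendant_dist u w) - real (pendant_dist z w)) * x w)"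
    using eig assms(1,2) by (simp add: right_diff_distrib left_diff_distrib sum_subtractf)
  also have "\<dots> = (\<Sum>q<K. (if q < k then \<alpha> else if q = k then \<beta> else \<gamma>) * X q)"
    unfolding coeff by (rule sum_V_pos[OF K(1)])
  also have "\<dots> = \<alpha> * P k + \<beta> * X k + \<gamma> * (mass - P (Suc k))"
    using sum_piecewise_coeff[OF K(2)] P_eq_mass[OF K(1)] unfolding P_def by simp
  finally show ?thesis .
qed

lemma rho_mult_diff_Vv_Suc:
  assumes "1 \<le> i" "i < l"
  shows "\<rho> * (X (2*i) - X (2*i+2)) = mass - P (2*i+2) - P (2*i+1)"
proof -
  have "Vv i \<in> V" "Vv (Suc i) \<in> V" using assms by (auto simp: Vv_in_V)
  from rho_mult_diff_piecewise[OF this pendant_dist_diff_Vv_Suc] this show ?thesis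
    by (simp add: X_pos[symmetric])
qed

lemma rho_mult_diff_Wv_Vv:
  assumes "j \<in> I"
  shows "\<rho> * (X (2*j+1) - X (2*j)) = P (2*j+1) - X (2*j+1)"
proof -
  have "Wv j \<in> V" "Vv j \<in> V" using assms I_subset by (auto simp: Vv_in_V Wv_in_V)
  from rho_mult_diff_piecewise[OF this pendant_dist_diff_Wv_Vv] this show ?thesis
    by (simp add: X_pos[symmetric])
qed

lemma rho_mult_diff_Wv_Vv_Suc:
  assumes "j \<in> I"
  shows "\<rho> * (X (2*j+1) - X (2*j+2)) = mass - P (2*j+2) - X (2*j+1)"
proof -
  have "Wv j \<in> V" "Vv (Suc j) \<in> V" using assms I_subset by (auto simp: Vv_in_V Wv_in_V)
  from rho_mult_diff_piecewise[OF this pendant_dist_diff_Wv_Vv_Suc] this show ?thesis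
    by (simp add: X_pos[symmetric])
qed

lemma rho_pos:
  assumes "2 \<le> l"
  shows "0 < \<rho>"
proof -
  have V: "Vv 1 \<in> V" "Vv 2 \<in> V" using assms by (auto simp: Vv_in_V)
  have "0 < real (pendant_dist (Vv 1) (Vv 2)) * x (Vv 2)"
    using V x_pos by simp
  also have "\<dots> \<le> (\<Sum>w\<in>V. real (pendant_dist (Vv 1) w) * x w)"
    using V finite_V x_pos by (intro member_le_sum) (auto intro!: mult_nonneg_nonneg simp: less_imp_le)
  also have "\<dots> = \<rho> * x (Vv 1)"
    using perron V hdist_eq_pendant_dist unfolding dist_perron_vector_def by auto
  finally show ?thesis
    using x_pos[OF V(1)] by (simp add: zero_less_mult_iff)
qed

definition f :: "nat \<Rightarrow> real" where
  "f i = X (2 * i) - X (2 * (l + 1 - i))"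

definition h :: "nat \<Rightarrow> real" where
  "h i = X (2 * (l - i) + 1) - X (2 * i + 1)"

(* weight of the vertices from v_(l+1-i) onwards minus the weight of those up to v_i *)
definition F :: "nat \<Rightarrow> real" where
  "F i = mass - P (2 * (l + 1 - i)) - P (2 * i + 1)"

lemma f_eq: "1 \<le> i \<Longrightarrow> i \<le> l \<Longrightarrow> f i = x (Vv i) - x (Vv (l + 1 - i))"
  unfolding f_def using X_Vv[of i] X_Vv[of "l + 1 - i"] by auto

lemma h_eq: "i \<in> I \<Longrightarrow> l - i \<in> I \<Longrightarrow> h i = x (Wv (l - i)) - x (Wv i)"
  unfolding h_def by (simp add: X_Wv)

lemma F_0: "F 0 = 0"
  using P_eq_mass[of "2 * l + 2"] X_Vv[of 0] by (simp add: F_def P_def)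

lemma h_0: "h 0 = 0"
  using I_subset X_Wv[of 0] X_Wv[of l] by (auto simp: h_def)

lemma F_Suc: "Suc k \<le> l \<Longrightarrow> F (Suc k) = F k - f (Suc k) + h k"
proof -
  assume k: "Suc k \<le> l"
  have "2 * (l + 1 - k) = Suc (Suc (2 * (l - k)))" "2 * Suc k + 1 = Suc (Suc (2 * k + 1))"
    "2 * (l + 1 - Suc k) = 2 * (l - k)" using k by auto
  then show ?thesis
    unfolding F_def f_def h_def by (simp add: P_Suc)
qed

lemma rho_mult_f_diff:
  assumes "1 \<le> i" "i < l"
  shows "\<rho> * (f i - f (Suc i)) = 2 * F i + h i"
proof -
  have "\<rho> * (X (2*(l-i)) - X (2*(l-i)+2)) = mass - P (2*(l-i)+2) - P (2*(l-i)+1)"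
    using assms by (intro rho_mult_diff_Vv_Suc) auto
  moreover have "2 * (l - i) + 2 = Suc (2 * (l - i) + 1)" "2 * (l + 1 - i) = 2 * (l - i) + 2"
    "2 * (l + 1 - Suc i) = 2 * (l - i)" using assms by auto
  ultimately show ?thesis
    using rho_mult_diff_Vv_Suc[OF assms] P_Suc[of "2 * i + 1"]
    unfolding f_def h_def F_def by (simp add: P_Suc algebra_simps)
qed

lemma rho_mult_h_f:
  assumes "j \<in> I" "l - j \<in> I"
  shows "\<rho> * (h j + f j) = F j - h j"
proof -
  have "j < l"
    using assms(1) I_subset by auto
  then have "2 * (l + 1 - j) = 2 * (l - j) + 2"
    by simp
  then show ?thesis
    using rho_mult_diff_Wv_Vv[OF assms(1)] rho_mult_diff_Wv_Vv_Suc[OF assms(2)]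
    unfolding f_def h_def F_def by (simp add: algebra_simps)
qed

lemma h_nonneg: "j \<notin> I \<Longrightarrow> 0 \<le> h j"
  unfolding h_def by (simp add: X_Wv x_pos Wv_in_V less_imp_le)

lemma h_pos: "j \<notin> I \<Longrightarrow> l - j \<in> I \<Longrightarrow> 0 < h j"
  unfolding h_def by (simp add: X_Wv x_pos Wv_in_V)

(* The reflection i -> l+1-i maps l div 2 + 1 to l div 2 for even l and fixes it for odd l. *)
lemma f_Suc_half: "f (Suc (l div 2)) = (if even l then - f (l div 2) else 0)"
  unfolding f_def by (cases "even l") (auto elim!: evenE oddE)

lemma f_Suc_le_iff:
  assumes "1 \<le> i" "i < l"
  shows "f (Suc i) \<le> f i \<longleftrightarrow> 0 \<le> 2 * F i + h i"
proof -
  have "0 < \<rho>" using assms by (intro rho_pos) simp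
  then have "f (Suc i) \<le> f i \<longleftrightarrow> 0 \<le> \<rho> * (f i - f (Suc i))"
    using mult_le_cancel_left_pos[of \<rho> 0] by simp
  then show ?thesis
    using rho_mult_f_diff[OF assms] by simp
qed

lemma f_Suc_less_iff:
  assumes "1 \<le> i" "i < l"
  shows "f (Suc i) < f i \<longleftrightarrow> 0 < 2 * F i + h i"
proof -
  have "0 < \<rho>" using assms by (intro rho_pos) simp
  then have "f (Suc i) < f i \<longleftrightarrow> 0 < \<rho> * (f i - f (Suc i))"
    using mult_less_cancel_left_pos[of \<rho> 0] by simp
  then show ?thesis
    using rho_mult_f_diff[OF assms] by simp
qed

lemma middle_sign:
  assumes "2 \<le> l"
  shows "0 \<le> 2 * F (l div 2) + h (l div 2) \<longleftrightarrow> 0 \<le> f (l div 2)"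
    and "0 < 2 * F (l div 2) + h (l div 2) \<longleftrightarrow> 0 < f (l div 2)"
proof -
  define c :: real where "c = (if even l then 2 else 1)"
  have "1 \<le> l div 2" "l div 2 < l" using assms by auto
  then have "2 * F (l div 2) + h (l div 2) = \<rho> * (f (l div 2) - f (Suc (l div 2)))"
    by (simp add: rho_mult_f_diff)
  also have "\<dots> = (\<rho> * c) * f (l div 2)"
    unfolding f_Suc_half c_def by simp
  finally have eq: "2 * F (l div 2) + h (l div 2) = (\<rho> * c) * f (l div 2)" .
  have "0 < \<rho> * c"
    using rho_pos[OF assms] unfolding c_def by simp
  from mult_le_cancel_left_pos[OF this, of 0] mult_less_cancel_left_pos[OF this, of 0]
  show "0 \<le> 2 * F (l div 2) + h (l div 2) \<longleftrightarrow> 0 \<le> f (l div 2)"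
    and "0 < 2 * F (l div 2) + h (l div 2) \<longleftrightarrow> 0 < f (l div 2)"
    unfolding eq by simp_all
qed

lemma h_sign:
  assumes "j \<in> I" "l - j \<in> I"
  shows "f j \<le> 0 \<Longrightarrow> 0 \<le> F j \<Longrightarrow> 0 \<le> h j"
    and "0 < f j \<Longrightarrow> F j \<le> 0 \<Longrightarrow> h j < 0"
proof -
  have \<rho>: "0 < \<rho>" using assms I_subset by (intro rho_pos) auto
  have eq: "(\<rho> + 1) * h j = F j - \<rho> * f j"
    using rho_mult_h_f[OF assms] by (simp add: algebra_simps)
  have \<rho>1: "0 < \<rho> + 1" using \<rho> by simp
  show "0 \<le> h j" if "f j \<le> 0" "0 \<le> F j"
  proof -
    have "\<rho> * f j \<le> 0" using that \<rho> mult_le_cancel_left_pos[of \<rho> "f j" 0] by simp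
    then have "0 \<le> (\<rho> + 1) * h j" using that eq by linarith
    then show ?thesis
      using mult_le_cancel_left_pos[OF \<rho>1, of 0] by simp
  qed
  show "h j < 0" if "0 < f j" "F j \<le> 0"
  proof -
    have "0 < \<rho> * f j" using that \<rho> by simp
    then show ?thesis
      using that eq mult_less_cancel_left_pos[OF \<rho>1, of "h j" 0] by simp
  qed
qed

end

section \<open>Sign propagation in T(n,a,b)\<close>

locale T_perron =
  fixes n a b :: nat and x :: "tvtx \<Rightarrow> real"
  assumes b_ge: "a + 2 \<le> b" and b_less: "2 * b < Tlen n a b"
    and perron_T: "dist_perron_vector (T_verts n a b) (T_edges n a b) x"

sublocale T_perron \<subseteq> pendant_path_perron "Tlen n a b" "Tidx n a b" x
proof
  show "Tidx n a b \<subseteq> {1..<Tlen n a b}"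
    using b_ge b_less unfolding Tidx_def by auto
  show "dist_perron_vector (pendant_path_verts (Tlen n a b) (Tidx n a b))
          (pendant_path_edges (Tlen n a b) (Tidx n a b)) x"
    using perron_T unfolding T_verts_eq T_edges_eq .
qed

context T_perron
begin

abbreviation "l \<equiv> Tlen n a b"
abbreviation "p \<equiv> l div 2"

lemma half_bounds: "a + 2 \<le> p" "1 \<le> p" "p < l" "2 \<le> l"
  using b_ge b_less by auto

lemma pendant_pair_in_Tidx: "1 \<le> j \<Longrightarrow> j \<le> a \<Longrightarrow> j \<in> Tidx n a b \<and> l - j \<in> Tidx n a b"
  using b_ge b_less unfolding Tidx_def by auto

lemma notin_Tidx: "a < j \<Longrightarrow> j \<le> p \<Longrightarrow> j \<notin> Tidx n a b"
  using b_less unfolding Tidx_def by auto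

lemma h_pos_Suc_a: "0 < h (a + 1)"
  using b_ge b_less by (intro h_pos) (auto simp: Tidx_def)

lemma h_nonneg_left:
  assumes "1 \<le> j" "j \<le> p" "f j \<le> 0" "0 \<le> F j"
  shows "0 \<le> h j"
proof (cases "j \<le> a")
  case True
  then show ?thesis using assms h_sign(1) pendant_pair_in_Tidx by blast
next
  case False
  then show ?thesis using assms h_nonneg notin_Tidx by simp
qed

lemma f_nonpos_propagates:
  assumes f1: "f 1 \<le> 0" and "1 \<le> i" "i \<le> p"
  shows "f i \<le> 0 \<and> 0 \<le> F i \<and> 0 \<le> h i \<and> (a + 2 \<le> i \<longrightarrow> f i < 0 \<and> 0 < F i)"
  using assms(2,3)
proof (induction i rule: dec_induct)
  case base
  have "0 \<le> F 1" using F_Suc[of 0] F_0 h_0 f1 half_bounds by simp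
  then show ?case using f1 h_nonneg_left[of 1] half_bounds by simp
next
  case (step i)
  then have IH: "f i \<le> 0" "0 \<le> F i" "0 \<le> h i" "a + 2 \<le> i \<Longrightarrow> f i < 0 \<and> 0 < F i"
    and i: "1 \<le> i" "Suc i \<le> p" by auto
  have i_l: "i < l" using i half_bounds by simp
  have F_Suc_i: "F (Suc i) = F i - f (Suc i) + h i" using F_Suc i_l by simp
  have "f (Suc i) \<le> f i" using f_Suc_le_iff[OF i(1) i_l] IH by simp
  then have f: "f (Suc i) \<le> 0" and F: "0 \<le> F (Suc i)" using IH F_Suc_i by auto
  have "f (Suc i) < 0 \<and> 0 < F (Suc i)" if "a + 2 \<le> Suc i"
  proof -
    have "0 < 2 * F i + h i"
      using IH that h_pos_Suc_a by (cases "i = a + 1") auto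
    then have "f (Suc i) < f i" using f_Suc_less_iff[OF i(1) i_l] by simp
    then show ?thesis using IH F_Suc_i by linarith
  qed
  then show ?case using f F h_nonneg_left[of "Suc i"] i by simp
qed

lemma f_1_pos: "0 < f 1"
proof (rule ccontr)
  assume "\<not> 0 < f 1"
  then have "f p < 0" "0 < F p"
    using f_nonpos_propagates[of p] half_bounds by auto
  moreover have "0 \<le> h p"
    using h_nonneg notin_Tidx half_bounds by simp
  ultimately show False
    using middle_sign(1)[OF half_bounds(4)] by simp
qed

lemma f_pos_up_to_Suc_a:
  assumes "1 \<le> i" "i \<le> a + 1"
  shows "0 < f i \<and> F i \<le> 0 \<and> (i \<le> a \<longrightarrow> h i < 0)"
  using assms
proof (induction i rule: dec_induct)
  case base
  have "F 1 \<le> 0" using F_Suc[of 0] F_0 h_0 f_1_pos half_bounds by simp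
  then show ?case using f_1_pos h_sign(2) pendant_pair_in_Tidx[of 1] by simp
next
  case (step i)
  then have IH: "0 < f i" "F i \<le> 0" "h i < 0" and i: "1 \<le> i" "i \<le> a" by auto
  have i_l: "i < l" using i half_bounds by simp
  have "f i < f (Suc i)" using f_Suc_le_iff[OF i(1) i_l] IH by simp
  then have f: "0 < f (Suc i)" and F: "F (Suc i) \<le> 0" using IH F_Suc[of i] i_l by auto
  then show ?case using h_sign(2) pendant_pair_in_Tidx[of "Suc i"] by simp
qed

lemma f_nonpos_propagates_down:
  assumes fp: "f p \<le> 0" and "a + 1 \<le> i" "i \<le> p"
  shows "f i \<le> 0 \<and> F i \<le> 0"
  using assms(3,2)
proof (induction i rule: inc_induct)
  case base
  have "0 \<le> h p" using h_nonneg notin_Tidx half_bounds by simp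
  then show ?case using fp middle_sign(2)[OF half_bounds(4)] by simp
next
  case (step i)
  then have IH: "f (Suc i) \<le> 0" "F (Suc i) \<le> 0" and i: "a < i" "i < p" by auto
  have i_l: "1 \<le> i" "i < l" using i half_bounds by auto
  have h: "0 \<le> h i" using h_nonneg notin_Tidx i by simp
  have F: "F i \<le> 0" using F_Suc[of i] i_l IH h by simp
  have "2 * F i + h i \<le> 0" using F_Suc[of i] i_l IH h by simp
  then have "f i \<le> f (Suc i)" using f_Suc_less_iff[OF i_l] by simp
  then show ?case using F IH by simp
qed

lemma f_half_pos: "0 < f p"
proof (rule ccontr)
  assume "\<not> 0 < f p"
  then have "f (a + 1) \<le> 0"
    using f_nonpos_propagates_down[of "a + 1"] half_bounds by simp
  then show False
    using f_pos_up_to_Suc_a[of "a + 1"] by simp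
qed

end

lemma nat_ceiling_half: "nat \<lceil>real l / 2\<rceil> = l - l div 2"
proof (cases "even l")
  case True
  then show ?thesis by (auto elim: evenE)
next
  case False
  then obtain k where k: "l = 2 * k + 1" by (auto elim: oddE)
  then have "\<lceil>real l / 2\<rceil> = int k + 1"
    unfolding ceiling_eq_iff by simp
  then show ?thesis using k by simp
qed

theorem lemma3p2:
  fixes n a b :: nat and x :: "tvtx \<Rightarrow> real"
  defines "l \<equiv> Tlen n a b"
  assumes hb: "b \<ge> a + 2"
    and hn: "2 * (a + b) < n - 1"
    and hbl: "real b < real l / 2"
    and hx: "dist_perron_vector (T_verts n a b) (T_edges n a b) x"
  shows "x (Vv (l div 2)) > x (Vv (nat \<lceil>real l / 2\<rceil> + 1)) \<and>
         (a \<ge> 1 \<longrightarrow> (\<forall>i\<in>{1..a}. x (Vv i) > x (Vv (l + 1 - i)) \<and> x (Wv i) > x (Wv (l - i)))) \<and>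
         x (Vv (a + 1)) > x (Vv (l - a))"
proof -
  have "2 * b < l" using hbl by linarith
  then interpret T_perron n a b x
    using hb hx unfolding l_def by unfold_locales simp_all
  have "x (Vv (l div 2)) > x (Vv (l + 1 - l div 2))"
    using f_half_pos f_eq half_bounds unfolding l_def by simp
  moreover have "x (Vv i) > x (Vv (l + 1 - i)) \<and> x (Wv i) > x (Wv (l - i))" if "i \<in> {1..a}" for i
    using that f_pos_up_to_Suc_a[of i] f_eq[of i] h_eq[of i] pendant_pair_in_Tidx[of i] half_bounds
    unfolding l_def by simp
  moreover have "x (Vv (a + 1)) > x (Vv (l - a))"
    using f_pos_up_to_Suc_a[of "a + 1"] f_eq[of "a + 1"] half_bounds unfolding l_def by simp
  moreover have "nat \<lceil>real l / 2\<rceil> + 1 = l + 1 - l div 2"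
    using nat_ceiling_half[of l] by simp
  ultimately show ?thesis
    by simp
qed

end
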